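(* Let $\langle\nabla_1,t_1\rangle$ and $\langle\nabla_2,t_2\rangle$ be terms-in-context such that $t_1,\nabla_1$ and $t_2,\nabla_2$ have disjoint sets of variables. Then $\langle\nabla_1,t_1\rangle$ and $\langle\nabla_2,t_2\rangle$ are joinable, i.e. there exists a term-in-context $\langle\Gamma,s\rangle$ with $\langle\nabla_1,t_1\rangle\preceq\langle\Gamma,s\rangle$ and $\langle\nabla_2,t_2\rangle\preceq\langle\Gamma,s\rangle$, if and only if the nominal unification problem $\{t_1\approx^? t_2\}\cup\nabla_1\cup\nabla_2$ has a solution, i.e. there exist a freshness context $\Gamma$ and a substitution $\sigma$ with $\Gamma\vdash t_1\sigma\approx t_2\sigma$ and $\Gamma\vdash a\# X\sigma$ for every $a\# X\in\nabla_1\cup\nabla_2$.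
   Context: Nominal terms $t::=f(t_1,\dots,t_n)\mid a\mid a.t\mid \pi\cdot X$ over sorted atoms $a,b,\dots$, variables $X,Y,\dots$ and function symbols; $\pi$ ranges over permutations (finite sequences of swappings $(a\,b)$ of same-sorted atoms, inverse = reversed sequence), $\pi\bullet t$ is the swapping action ($(a\,b)$ exchanges $a$ and $b$ everywhere and $(a\,b)\bullet(\pi\cdot X)=((a\,b)\pi)\cdot X$). Substitutions $\sigma$ map variables to terms of the same sort; application $t\sigma$ allows atom capture and $(\pi\cdot X)\sigma=\pi\bullet(X\sigma)$. A freshness context is a finite set of constraints $a\# X$. Judgments: $\nabla\vdash a\approx a$; $\nabla\vdash a.t\approx a.t'$ if $\nabla\vdash t\approx t'$; $\nabla\vdash a.t\approx a'.t'$ if $a\neq a'$, $\nabla\vdash t\approx(a\,a')\bullet t'$ and $\nabla\vdash a\# t'$; $\nabla\vdash\pi\cdot X\approx\pi'\cdot X$ if $a\# X\in\nabla$ for all $a$ with $\pi\bullet a\neq\pi'\bullet a$; $\nabla\vdash f(t_1,..,t_n)\approx f(t'_1,..,t'_n)$ if $\nabla\vdash t_i\approx t'_i$ for all $i$; $\nabla\vdash a\# a'$ if $a\ne a'$; $\nabla\vdash a\#\pi\cdot X$ if $\pi^{-1}\bullet a\# X\in\nabla$; $\nabla\vdash a\# f(t_1,..,t_n)$ if $\nabla\vdash a\# t_i$ for all $i$; $\nabla\vdash a\# a.t$; $\nabla\vdash a\# a'.t$ if $a\ne a'$ and $\nabla\vdash a\# t$. The algorithm ${\sf FC}$ on a finite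 set $F$ of formulas $a\# t$: starting from $F;\emptyset$, apply as long as possible: $\{a\# b\}\uplus F';\Delta\Rightarrow F';\Delta$ if $a\neq b$; $\{a\# a.t\}\uplus F';\Delta\Rightarrow F';\Delta$; $\{a\# b.t\}\uplus F';\Delta\Rightarrow\{a\# t\}\cup F';\Delta$ if $a\neq b$; $\{a\# f(t_1,\dots,t_n)\}\uplus F';\Delta\Rightarrow \{a\# t_1,\dots,a\# t_n\}\cup F';\Delta$; $\{a\#\pi\cdot X\}\uplus F';\Delta\Rightarrow F';\{\pi^{-1}\bullet a\# X\}\cup\Delta$; the result is $\Delta$ if the terminal state is $\emptyset;\Delta$ and $\bot$ if it contains some $a\# a$. $\nabla\sigma:={\sf FC}(\{a\# X\sigma\mid a\# X\in\nabla\})$. $\sigma$ respects $\nabla$ if for every $X$, no atom $a$ with $a\# X\in\nabla$ occurs free in $X\sigma$ outside of suspensions. A term-in-context is a pair $\langle\nabla,t\rangle$; $\langle\nabla_1,t_1\rangle\preceq\langle\nabla_2,t_2\rangle$ if there is a substitution $\sigma$ respecting $\nabla_1$ with $\nabla_1\sigma\subseteq\nabla_2$ and $\nabla_2\vdash t_1\sigma\approx t_2$. *)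

theory Defs
  imports Main
begin

text \<open>Atoms of type 'a, variables of type 'v, function symbols of type 'f, sorts of type 's.
  The sort discipline is kept abstract: a sort signature assigns sorts to atoms and variables,
  an arity (argument sorts, result sort) to every function symbol, and tells what the sort of
  an abstraction a.t is, given the sort of a and the sort of t.\<close>

record ('a, 'v, 'f, 's) sortsig =
  asort :: "'a \<Rightarrow> 's"
  vsort :: "'v \<Rightarrow> 's"
  fsig  :: "'f \<Rightarrow> 's list \<times> 's"
  abss  :: "'s \<Rightarrow> 's \<Rightarrow> 's"

datatype ('a, 'v, 'f) trm =
    Fn 'f "('a, 'v, 'f) trm list"
  | At 'a
  | Ab 'a "('a, 'v, 'f) trm"
  | Susp "('a \<times> 'a) list" 'v

text \<open>Permutations are finite lists of swappings; [(a1,b1),...,(an,bn)] denotes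
  (a1 b1)...(an bn), acting on an atom by applying the rightmost swapping first.\<close>

type_synonym 'a perm = "('a \<times> 'a) list"

definition swap_atom :: "'a \<Rightarrow> 'a \<Rightarrow> 'a \<Rightarrow> 'a" where
  "swap_atom a b c = (if c = a then b else if c = b then a else c)"

definition perm_atom :: "'a perm \<Rightarrow> 'a \<Rightarrow> 'a" where
  "perm_atom \<pi> c = foldr (\<lambda>(a, b) x. swap_atom a b x) \<pi> c"

definition perm_inv :: "'a perm \<Rightarrow> 'a perm" where
  "perm_inv \<pi> = rev \<pi>"

fun perm_trm :: "'a perm \<Rightarrow> ('a, 'v, 'f) trm \<Rightarrow> ('a, 'v, 'f) trm" where
  "perm_trm \<pi> (Fn f ts) = Fn f (map (perm_trm \<pi>) ts)"
| "perm_trm \<pi> (At a) = At (perm_atom \<pi> a)"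
| "perm_trm \<pi> (Ab a t) = Ab (perm_atom \<pi> a) (perm_trm \<pi> t)"
| "perm_trm \<pi> (Susp \<pi>' X) = Susp (\<pi> @ \<pi>') X"

inductive wsorted :: "('a, 'v, 'f, 's) sortsig \<Rightarrow> ('a, 'v, 'f) trm \<Rightarrow> 's \<Rightarrow> bool"
  for \<Sigma> :: "('a, 'v, 'f, 's) sortsig" where
  ws_at: "wsorted \<Sigma> (At a) (asort \<Sigma> a)"
| ws_ab: "wsorted \<Sigma> t s \<Longrightarrow> wsorted \<Sigma> (Ab a t) (abss \<Sigma> (asort \<Sigma> a) s)"
| ws_fn: "fsig \<Sigma> f = (ss, s) \<Longrightarrow> list_all2 (wsorted \<Sigma>) ts ss \<Longrightarrow> wsorted \<Sigma> (Fn f ts) s"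
| ws_susp: "(\<forall>(a, b) \<in> set \<pi>. asort \<Sigma> a = asort \<Sigma> b) \<Longrightarrow>
            wsorted \<Sigma> (Susp \<pi> X) (vsort \<Sigma> X)"

text \<open>Substitutions map variables to (well-sorted) terms of the same sort;
  application allows atom capture and (\<pi>\<cdot>X)\<sigma> = \<pi>\<bullet>(X\<sigma>).\<close>

type_synonym ('a, 'v, 'f) subst = "'v \<Rightarrow> ('a, 'v, 'f) trm"

definition is_subst :: "('a, 'v, 'f, 's) sortsig \<Rightarrow> ('a, 'v, 'f) subst \<Rightarrow> bool" where
  "is_subst \<Sigma> \<sigma> \<longleftrightarrow> (\<forall>X. wsorted \<Sigma> (\<sigma> X) (vsort \<Sigma> X))"

fun subst_trm :: "('a, 'v, 'f) subst \<Rightarrow> ('a, 'v, 'f) trm \<Rightarrow> ('a, 'v, 'f) trm" where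
  "subst_trm \<sigma> (Fn f ts) = Fn f (map (subst_trm \<sigma>) ts)"
| "subst_trm \<sigma> (At a) = At a"
| "subst_trm \<sigma> (Ab a t) = Ab a (subst_trm \<sigma> t)"
| "subst_trm \<sigma> (Susp \<pi> X) = perm_trm \<pi> (\<sigma> X)"

fun vars_trm :: "('a, 'v, 'f) trm \<Rightarrow> 'v set" where
  "vars_trm (Fn f ts) = (\<Union>t \<in> set ts. vars_trm t)"
| "vars_trm (At a) = {}"
| "vars_trm (Ab a t) = vars_trm t"
| "vars_trm (Susp \<pi> X) = {X}"

text \<open>Atoms occurring free outside of suspensions.\<close>

fun fa_ns :: "('a, 'v, 'f) trm \<Rightarrow> 'a set" where
  "fa_ns (Fn f ts) = (\<Union>t \<in> set ts. fa_ns t)"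
| "fa_ns (At a) = {a}"
| "fa_ns (Ab a t) = fa_ns t - {a}"
| "fa_ns (Susp \<pi> X) = {}"

text \<open>A freshness constraint a#X is the pair (a, X); a freshness context is a finite set of them.\<close>

type_synonym ('a, 'v) fctx = "('a \<times> 'v) set"

definition vars_ctx :: "('a, 'v) fctx \<Rightarrow> 'v set" where
  "vars_ctx N = snd ` N"

inductive fresh :: "('a, 'v) fctx \<Rightarrow> 'a \<Rightarrow> ('a, 'v, 'f) trm \<Rightarrow> bool"
  for N :: "('a, 'v) fctx" where
  fr_at: "a \<noteq> a' \<Longrightarrow> fresh N a (At a')"
| fr_susp: "(perm_atom (perm_inv \<pi>) a, X) \<in> N \<Longrightarrow> fresh N a (Susp \<pi> X)"
| fr_fn: "(\<forall>t \<in> set ts. fresh N a t) \<Longrightarrow> fresh N a (Fn f ts)"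
| fr_ab_eq: "fresh N a (Ab a t)"
| fr_ab: "a \<noteq> a' \<Longrightarrow> fresh N a t \<Longrightarrow> fresh N a (Ab a' t)"

inductive aeq :: "('a, 'v) fctx \<Rightarrow> ('a, 'v, 'f) trm \<Rightarrow> ('a, 'v, 'f) trm \<Rightarrow> bool"
  for N :: "('a, 'v) fctx" where
  aeq_at: "aeq N (At a) (At a)"
| aeq_ab_eq: "aeq N t t' \<Longrightarrow> aeq N (Ab a t) (Ab a t')"
| aeq_ab: "a \<noteq> a' \<Longrightarrow> aeq N t (perm_trm [(a, a')] t') \<Longrightarrow> fresh N a t' \<Longrightarrow>
           aeq N (Ab a t) (Ab a' t')"
| aeq_susp: "(\<forall>a. perm_atom \<pi> a \<noteq> perm_atom \<pi>' a \<longrightarrow> (a, X) \<in> N) \<Longrightarrow>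
             aeq N (Susp \<pi> X) (Susp \<pi>' X)"
| aeq_fn: "list_all2 (aeq N) ts ts' \<Longrightarrow> aeq N (Fn f ts) (Fn f ts')"

text \<open>Result of running FC on the single formula a#t: None encodes \<bottom>, Some \<Delta> the
  resulting freshness context.\<close>

fun fc1 :: "'a \<Rightarrow> ('a, 'v, 'f) trm \<Rightarrow> ('a, 'v) fctx option"
and fc1_list :: "'a \<Rightarrow> ('a, 'v, 'f) trm list \<Rightarrow> ('a, 'v) fctx option" where
  "fc1 a (At b) = (if a = b then None else Some {})"
| "fc1 a (Ab b t) = (if a = b then Some {} else fc1 a t)"
| "fc1 a (Fn f ts) = fc1_list a ts"
| "fc1 a (Susp \<pi> X) = Some {(perm_atom (perm_inv \<pi>) a, X)}"
| "fc1_list a [] = Some {}"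
| "fc1_list a (t # ts) =
     (case (fc1 a t, fc1_list a ts) of
        (Some \<Delta>1, Some \<Delta>2) \<Rightarrow> Some (\<Delta>1 \<union> \<Delta>2)
      | _ \<Rightarrow> None)"

definition FC :: "('a \<times> ('a, 'v, 'f) trm) set \<Rightarrow> ('a, 'v) fctx option" where
  "FC F = (if \<exists>(a, t) \<in> F. fc1 a t = None then None
           else Some (\<Union>(a, t) \<in> F. the (fc1 a t)))"

definition ctx_subst :: "('a, 'v) fctx \<Rightarrow> ('a, 'v, 'f) subst \<Rightarrow> ('a, 'v) fctx option" where
  "ctx_subst N \<sigma> = FC ((\<lambda>(a, X). (a, \<sigma> X)) ` N)"

definition respects_ctx :: "('a, 'v, 'f) subst \<Rightarrow> ('a, 'v) fctx \<Rightarrow> bool" where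
  "respects_ctx \<sigma> N \<longleftrightarrow> (\<forall>(a, X) \<in> N. a \<notin> fa_ns (\<sigma> X))"

definition term_in_ctx :: "('a, 'v, 'f, 's) sortsig \<Rightarrow> ('a, 'v) fctx \<Rightarrow> ('a, 'v, 'f) trm \<Rightarrow> bool" where
  "term_in_ctx \<Sigma> N t \<longleftrightarrow> finite N \<and> (\<exists>s. wsorted \<Sigma> t s)"

definition tic_le ::
  "('a, 'v, 'f, 's) sortsig \<Rightarrow> ('a, 'v) fctx \<times> ('a, 'v, 'f) trm \<Rightarrow> ('a, 'v) fctx \<times> ('a, 'v, 'f) trm \<Rightarrow> bool" where
  "tic_le \<Sigma> P Q \<longleftrightarrow> (case (P, Q) of ((N1, t1), (N2, t2)) \<Rightarrow>
     (\<exists>\<sigma>. is_subst \<Sigma> \<sigma> \<and> respects_ctx \<sigma> N1 \<and>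
          (\<exists>\<Delta>. ctx_subst N1 \<sigma> = Some \<Delta> \<and> \<Delta> \<subseteq> N2) \<and>
          aeq N2 (subst_trm \<sigma> t1) t2))"

definition joinable ::
  "('a, 'v, 'f, 's) sortsig \<Rightarrow> ('a, 'v) fctx \<times> ('a, 'v, 'f) trm \<Rightarrow> ('a, 'v) fctx \<times> ('a, 'v, 'f) trm \<Rightarrow> bool" where
  "joinable \<Sigma> P Q \<longleftrightarrow> (\<exists>G s. term_in_ctx \<Sigma> G s \<and> tic_le \<Sigma> P (G, s) \<and> tic_le \<Sigma> Q (G, s))"

definition nom_unif_solvable ::
  "('a, 'v, 'f, 's) sortsig \<Rightarrow> ('a, 'v, 'f) trm \<Rightarrow> ('a, 'v, 'f) trm \<Rightarrow> ('a, 'v) fctx \<Rightarrow> bool" where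
  "nom_unif_solvable \<Sigma> t1 t2 N \<longleftrightarrow>
     (\<exists>G \<sigma>. finite G \<and> is_subst \<Sigma> \<sigma> \<and> aeq G (subst_trm \<sigma> t1) (subst_trm \<sigma> t2) \<and>
             (\<forall>(a, X) \<in> N. fresh G a (\<sigma> X)))"

end

(*
  Gluing the two substitutions of a join along the disjoint variable sets gives a single
  substitution sigma with t1 sigma ~ s ~ t2 sigma, so a join yields a solution as soon as
  alpha-equivalence is symmetric and transitive; conversely a solution (G, sigma) joins both
  terms-in-context at (G, t2 sigma). In both directions the condition N sigma <= G of the
  preorder is equivalent to G |- a # X sigma for all a # X in N, because FC is sound and complete
  for freshness, and this freshness also shows that sigma respects N.

  Transitivity of alpha-equivalence is proved by induction on the left term. For abstractions it
  rests on equivariance and on pi.t ~ pi'.t whenever every atom on which pi and pi' disagree is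
  fresh for t, applied to (a b)(b c) and (a c).
*)
theory Submission
  imports Defs
begin

lemma perm_atom_Nil [simp]: "perm_atom [] c = c"
  by (simp add: perm_atom_def)

lemma perm_atom_Cons [simp]: "perm_atom ((a, b) # \<pi>) c = swap_atom a b (perm_atom \<pi> c)"
  by (simp add: perm_atom_def)

lemma perm_atom_append [simp]: "perm_atom (\<pi> @ \<pi>') c = perm_atom \<pi> (perm_atom \<pi>' c)"
  by (simp add: perm_atom_def)

lemma swap_atom_swap_atom [simp]: "swap_atom a b (swap_atom a b c) = c"
  by (simp add: swap_atom_def)

lemma swap_atom_same [simp]: "swap_atom a a c = c"
  by (simp add: swap_atom_def)

lemma perm_inv_Nil [simp]: "perm_inv [] = []"
  by (simp add: perm_inv_def)

lemma perm_inv_Cons [simp]: "perm_inv ((a, b) # \<pi>) = perm_inv \<pi> @ [(a, b)]"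
  by (simp add: perm_inv_def)

lemma perm_inv_append [simp]: "perm_inv (\<pi> @ \<pi>') = perm_inv \<pi>' @ perm_inv \<pi>"
  by (simp add: perm_inv_def)

lemma perm_atom_inv_cancel_left [simp]: "perm_atom (perm_inv \<pi>) (perm_atom \<pi> c) = c"
  by (induction \<pi> arbitrary: c) auto

lemma perm_atom_inv_cancel_right [simp]: "perm_atom \<pi> (perm_atom (perm_inv \<pi>) c) = c"
  by (induction \<pi> arbitrary: c) auto

lemma perm_atom_eq_iff [simp]: "perm_atom \<pi> c = perm_atom \<pi> d \<longleftrightarrow> c = d"
  by (metis perm_atom_inv_cancel_left)

lemma perm_atom_inv_eq_iff: "perm_atom (perm_inv \<pi>) a = b \<longleftrightarrow> a = perm_atom \<pi> b"
  by (metis perm_atom_inv_cancel_left perm_atom_inv_cancel_right)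

lemma perm_atom_inv_cong:
  "perm_atom \<pi> = perm_atom \<pi>' \<Longrightarrow> perm_atom (perm_inv \<pi>) = perm_atom (perm_inv \<pi>')"
  by (rule ext) (metis perm_atom_inv_cancel_left perm_atom_inv_cancel_right)

lemma perm_atom_swap_atom:
  "perm_atom \<pi> (swap_atom a b c) = swap_atom (perm_atom \<pi> a) (perm_atom \<pi> b) (perm_atom \<pi> c)"
  by (simp add: swap_atom_def)

lemma perm_trm_Nil [simp]: "perm_trm [] t = t"
  by (induction t) (auto simp: map_idI)

lemma perm_trm_append: "perm_trm (\<pi> @ \<pi>') t = perm_trm \<pi> (perm_trm \<pi>' t)"
  by (induction t) auto

lemma fresh_At [simp]: "fresh N a (At b) \<longleftrightarrow> a \<noteq> b"
  by (auto elim: fresh.cases intro: fresh.intros)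

lemma fresh_Ab [simp]: "fresh N a (Ab b t) \<longleftrightarrow> a = b \<or> fresh N a t"
  by (auto elim: fresh.cases intro: fresh.intros)

lemma fresh_Fn [simp]: "fresh N a (Fn f ts) \<longleftrightarrow> (\<forall>t \<in> set ts. fresh N a t)"
  by (auto elim: fresh.cases intro: fresh.intros)

lemma fresh_Susp [simp]: "fresh N a (Susp \<pi> X) \<longleftrightarrow> (perm_atom (perm_inv \<pi>) a, X) \<in> N"
  by (auto elim: fresh.cases intro: fresh.intros)

lemma fresh_perm_trm: "fresh N a (perm_trm \<pi> t) \<longleftrightarrow> fresh N (perm_atom (perm_inv \<pi>) a) t"
  by (induction t arbitrary: a) (auto simp: perm_atom_inv_eq_iff)

lemma fresh_perm_trm_perm_atom [simp]:
  "fresh N (perm_atom \<pi> a) (perm_trm \<pi> t) \<longleftrightarrow> fresh N a t"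
  by (simp add: fresh_perm_trm)

lemma fresh_swap_trm:
  "c \<noteq> a \<Longrightarrow> c \<noteq> b \<Longrightarrow> fresh N c (perm_trm [(a, b)] t) \<longleftrightarrow> fresh N c t"
  by (simp add: fresh_perm_trm perm_inv_def swap_atom_def)

lemma fresh_imp_notin_fa_ns: "fresh N a t \<Longrightarrow> a \<notin> fa_ns t"
  by (induction rule: fresh.induct) auto

text \<open>\<open>perm_trm \<pi> t\<close> depends on the list \<open>\<pi>\<close>, not only on the bijection \<open>perm_atom \<pi>\<close>;
  \<open>perm_rep_eq\<close> identifies terms that differ only in how their suspended permutations are
  represented.\<close>

inductive perm_rep_eq :: "('a, 'v, 'f) trm \<Rightarrow> ('a, 'v, 'f) trm \<Rightarrow> bool" where
  perm_rep_eq_At: "perm_rep_eq (At a) (At a)"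
| perm_rep_eq_Ab: "perm_rep_eq t t' \<Longrightarrow> perm_rep_eq (Ab a t) (Ab a t')"
| perm_rep_eq_Susp: "perm_atom \<pi> = perm_atom \<pi>' \<Longrightarrow> perm_rep_eq (Susp \<pi> X) (Susp \<pi>' X)"
| perm_rep_eq_Fn: "list_all2 perm_rep_eq ts ts' \<Longrightarrow> perm_rep_eq (Fn f ts) (Fn f ts')"

inductive_cases perm_rep_eq_AtE: "perm_rep_eq (At a) u"
inductive_cases perm_rep_eq_AbE: "perm_rep_eq (Ab a t) u"
inductive_cases perm_rep_eq_SuspE: "perm_rep_eq (Susp \<pi> X) u"
inductive_cases perm_rep_eq_FnE: "perm_rep_eq (Fn f ts) u"

lemma perm_rep_eq_refl: "perm_rep_eq t t"
  by (induction t) (auto intro: perm_rep_eq.intros list.rel_refl_strong)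

lemma perm_rep_eq_perm_trm:
  "perm_rep_eq t t' \<Longrightarrow> perm_atom \<pi> = perm_atom \<pi>' \<Longrightarrow>
   perm_rep_eq (perm_trm \<pi> t) (perm_trm \<pi>' t')"
proof (induction t t' rule: perm_rep_eq.induct)
  case (perm_rep_eq_Fn ts ts' f)
  then show ?case
    by (auto intro!: perm_rep_eq.intros simp: list_all2_map1 list_all2_map2 elim: list_all2_mono)
qed (auto intro!: perm_rep_eq.intros)

lemma perm_rep_eq_perm_trm_cong:
  "perm_atom \<pi> = perm_atom \<pi>' \<Longrightarrow> perm_rep_eq (perm_trm \<pi> t) (perm_trm \<pi>' t)"
  by (rule perm_rep_eq_perm_trm[OF perm_rep_eq_refl])

lemma fresh_perm_rep_eq: "perm_rep_eq t t' \<Longrightarrow> fresh N a t \<Longrightarrow> fresh N a t'"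
proof (induction t t' arbitrary: a rule: perm_rep_eq.induct)
  case (perm_rep_eq_Susp \<pi> \<pi>' X)
  then show ?case using perm_atom_inv_cong[OF perm_rep_eq_Susp(1)] by simp
next
  case (perm_rep_eq_Fn ts ts' f)
  show ?case unfolding fresh_Fn
  proof
    fix t' assume "t' \<in> set ts'"
    then obtain i where "i < length ts'" "t' = ts' ! i" by (auto simp: in_set_conv_nth)
    then show "fresh N a t'" using perm_rep_eq_Fn by (auto simp: list_all2_conv_all_nth)
  qed
qed auto

inductive_cases aeq_AtE: "aeq N (At a) u"
inductive_cases aeq_AbE: "aeq N (Ab a t) u"
inductive_cases aeq_SuspE: "aeq N (Susp \<pi> X) u"
inductive_cases aeq_FnE: "aeq N (Fn f ts) u"

lemma aeq_perm_rep_eq: "aeq N t t' \<Longrightarrow> perm_rep_eq t u \<Longrightarrow> perm_rep_eq t' u' \<Longrightarrow> aeq N u u'"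
proof (induction t t' arbitrary: u u' rule: aeq.induct)
  case (aeq_at a)
  then show ?case by (auto elim!: perm_rep_eq_AtE intro: aeq.intros)
next
  case (aeq_ab_eq t t' a)
  then show ?case by (auto elim!: perm_rep_eq_AbE intro: aeq.intros)
next
  case (aeq_ab a a' t t')
  obtain s where u: "u = Ab a s" "perm_rep_eq t s"
    using aeq_ab.prems(1) by (auto elim: perm_rep_eq_AbE)
  obtain s' where u': "u' = Ab a' s'" "perm_rep_eq t' s'"
    using aeq_ab.prems(2) by (auto elim: perm_rep_eq_AbE)
  have "aeq N s (perm_trm [(a, a')] s')"
    using aeq_ab.IH u(2) perm_rep_eq_perm_trm[OF u'(2)] by blast
  moreover have "fresh N a s'" using fresh_perm_rep_eq[OF u'(2)] aeq_ab.hyps by blast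
  ultimately show ?case unfolding u u' using aeq_ab.hyps(1) by (rule aeq.aeq_ab[rotated])
next
  case (aeq_susp \<pi> \<pi>' X)
  obtain \<rho> where u: "u = Susp \<rho> X" "perm_atom \<pi> = perm_atom \<rho>"
    using aeq_susp.prems(1) by (auto elim: perm_rep_eq_SuspE)
  obtain \<rho>' where u': "u' = Susp \<rho>' X" "perm_atom \<pi>' = perm_atom \<rho>'"
    using aeq_susp.prems(2) by (auto elim: perm_rep_eq_SuspE)
  show ?case unfolding u u' using aeq_susp.hyps u(2) u'(2) by (intro aeq.aeq_susp) metis
next
  case (aeq_fn ts ts' f)
  obtain us where u: "u = Fn f us" "list_all2 perm_rep_eq ts us"
    using aeq_fn.prems(1) by (auto elim: perm_rep_eq_FnE)
  obtain us' where u': "u' = Fn f us'" "list_all2 perm_rep_eq ts' us'"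
    using aeq_fn.prems(2) by (auto elim: perm_rep_eq_FnE)
  have "list_all2 (aeq N) us us'"
    using aeq_fn.IH u(2) u'(2) unfolding list_all2_conv_all_nth by simp
  then show ?case unfolding u u' by (rule aeq.aeq_fn)
qed

lemma aeq_perm_trm_cong_left:
  "aeq N (perm_trm \<pi> s) t \<Longrightarrow> perm_atom \<pi> = perm_atom \<pi>' \<Longrightarrow> aeq N (perm_trm \<pi>' s) t"
  using aeq_perm_rep_eq perm_rep_eq_perm_trm_cong perm_rep_eq_refl by blast

lemma aeq_perm_trm_cong_right:
  "aeq N s (perm_trm \<pi> t) \<Longrightarrow> perm_atom \<pi> = perm_atom \<pi>' \<Longrightarrow> aeq N s (perm_trm \<pi>' t)"
  using aeq_perm_rep_eq perm_rep_eq_perm_trm_cong perm_rep_eq_refl by blast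

lemma aeq_refl: "aeq N t t"
  by (induction t) (auto intro!: aeq.intros list.rel_refl_strong)

lemma fresh_aeq: "aeq N t t' \<Longrightarrow> fresh N c t \<Longrightarrow> fresh N c t'"
proof (induction t t' arbitrary: c rule: aeq.induct)
  case (aeq_ab a a' t t')
  show ?case
  proof (cases "c = a \<or> c = a'")
    case False
    then have "fresh N c (perm_trm [(a, a')] t')" using aeq_ab by simp
    then show ?thesis using False by (simp add: fresh_swap_trm)
  qed (use aeq_ab.hyps in auto)
next
  case (aeq_susp \<pi> \<pi>' X)
  define b where "b = perm_atom (perm_inv \<pi>') c"
  show ?case
  proof (cases "perm_atom \<pi> b = c")
    case True
    then have "perm_atom (perm_inv \<pi>) c = b" by (simp add: perm_atom_inv_eq_iff)
    then show ?thesis using aeq_susp.prems by (simp add: b_def)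
  next
    case False
    then show ?thesis using aeq_susp.hyps by (auto simp: b_def)
  qed
next
  case (aeq_fn ts ts' f)
  show ?case unfolding fresh_Fn
  proof
    fix t' assume "t' \<in> set ts'"
    then obtain i where "i < length ts'" "t' = ts' ! i" by (auto simp: in_set_conv_nth)
    then show "fresh N c t'" using aeq_fn by (auto simp: list_all2_conv_all_nth)
  qed
qed auto

lemma aeq_perm_trm: "aeq N t t' \<Longrightarrow> aeq N (perm_trm \<pi> t) (perm_trm \<pi> t')"
proof (induction t t' rule: aeq.induct)
  case (aeq_ab a a' t t')
  have "aeq N (perm_trm \<pi> t) (perm_trm (\<pi> @ [(a, a')]) t')"
    using aeq_ab.IH by (simp add: perm_trm_append)
  then have "aeq N (perm_trm \<pi> t) (perm_trm ([(perm_atom \<pi> a, perm_atom \<pi> a')] @ \<pi>) t')"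
    by (rule aeq_perm_trm_cong_right) (auto simp: fun_eq_iff perm_atom_swap_atom)
  then have "aeq N (perm_trm \<pi> t) (perm_trm [(perm_atom \<pi> a, perm_atom \<pi> a')] (perm_trm \<pi> t'))"
    by (simp only: perm_trm_append)
  then show ?case using aeq_ab.hyps by (simp add: aeq.aeq_ab)
next
  case (aeq_fn ts ts' f)
  then show ?case
    by (auto intro!: aeq.intros simp: list_all2_map1 list_all2_map2 elim: list_all2_mono)
qed (auto intro!: aeq.intros)

lemma aeq_perm_trm_swap_same_iff: "aeq N t (perm_trm [(a, a)] t') \<longleftrightarrow> aeq N t t'"
  using aeq_perm_trm_cong_right[of N t "[(a, a)]" t' "[]"]
    aeq_perm_trm_cong_right[of N t "[]" t' "[(a, a)]"]
  by (auto simp: fun_eq_iff)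

lemma aeq_Ab_iff:
  "aeq N (Ab a t) (Ab b t') \<longleftrightarrow> aeq N t (perm_trm [(a, b)] t') \<and> (a = b \<or> fresh N a t')"
  by (cases "a = b") (auto elim: aeq_AbE intro: aeq.intros simp: aeq_perm_trm_swap_same_iff)

lemma aeq_sym: "aeq N t t' \<Longrightarrow> aeq N t' t"
proof (induction t t' rule: aeq.induct)
  case (aeq_ab a a' t t')
  have "aeq N (perm_trm ([(a, a')] @ [(a, a')]) t') (perm_trm [(a, a')] t)"
    using aeq_perm_trm[OF aeq_ab.IH] by (simp only: perm_trm_append)
  then have "aeq N (perm_trm [] t') (perm_trm [(a, a')] t)"
    by (rule aeq_perm_trm_cong_left) (auto simp: fun_eq_iff swap_atom_def)
  then have "aeq N t' (perm_trm [(a', a)] t)"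
    by (simp add: aeq_perm_trm_cong_right fun_eq_iff swap_atom_def)
  moreover have "fresh N a' t"
  proof -
    have "fresh N (perm_atom [(a, a')] a) (perm_trm [(a, a')] t')"
      using aeq_ab.hyps by (simp only: fresh_perm_trm_perm_atom)
    then show ?thesis using fresh_aeq[OF aeq_ab.IH] by (simp add: swap_atom_def)
  qed
  ultimately show ?case using aeq_ab.hyps by (simp add: aeq.aeq_ab)
next
  case (aeq_susp \<pi> \<pi>' X)
  then show ?case by (metis aeq.aeq_susp)
next
  case (aeq_fn ts ts' f)
  then have "list_all2 (aeq N) ts' ts" by (auto simp: list_all2_conv_all_nth)
  then show ?case by (rule aeq.aeq_fn)
qed (auto intro: aeq.intros)

lemma aeq_perm_trm_disagreement:
  "(\<forall>a. perm_atom \<pi> a \<noteq> perm_atom \<pi>' a \<longrightarrow> fresh N a t) \<Longrightarrow>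
   aeq N (perm_trm \<pi> t) (perm_trm \<pi>' t)"
proof (induction t arbitrary: \<pi> \<pi>')
  case (Fn f ts)
  then show ?case
    by (auto intro!: aeq.intros list.rel_refl_strong simp: list_all2_map1 list_all2_map2)
next
  case (Ab b t)
  define \<rho> where "\<rho> = [(perm_atom \<pi> b, perm_atom \<pi>' b)] @ \<pi>'"
  have "aeq N (perm_trm \<pi> t) (perm_trm \<rho> t)"
  proof (rule Ab.IH, intro allI impI)
    fix a assume "perm_atom \<pi> a \<noteq> perm_atom \<rho> a"
    then have "a \<noteq> b \<and> perm_atom \<pi> a \<noteq> perm_atom \<pi>' a"
      by (auto simp: \<rho>_def swap_atom_def split: if_splits)
    then show "fresh N a t" using Ab.prems by auto
  qed
  moreover have "fresh N (perm_atom \<pi> b) (perm_trm \<pi>' t)"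
    if ne: "perm_atom \<pi> b \<noteq> perm_atom \<pi>' b"
  proof -
    define c where "c = perm_atom (perm_inv \<pi>') (perm_atom \<pi> b)"
    have "c \<noteq> b" and "perm_atom \<pi> c \<noteq> perm_atom \<pi>' c"
      using ne by (auto simp: c_def perm_atom_inv_eq_iff)
    then have "fresh N c t" using Ab.prems by auto
    then show ?thesis by (simp add: fresh_perm_trm c_def)
  qed
  ultimately show ?case
    unfolding \<rho>_def perm_trm_append by (simp only: perm_trm.simps aeq_Ab_iff) blast
next
  case (At x)
  then have "perm_atom \<pi> x = perm_atom \<pi>' x" by auto
  then show ?case by (simp add: aeq.aeq_at)
next
  case (Susp \<rho> X)
  then show ?case by (auto intro!: aeq.aeq_susp simp: perm_atom_inv_eq_iff)
qed

lemma aeq_perm_trm_swap_swap: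
  assumes "a = c \<or> fresh N a t" and "b = c \<or> fresh N b t"
  shows "aeq N (perm_trm [(a, b)] (perm_trm [(b, c)] t)) (perm_trm [(a, c)] t)"
proof -
  have "aeq N (perm_trm ([(a, b)] @ [(b, c)]) t) (perm_trm [(a, c)] t)"
  proof (rule aeq_perm_trm_disagreement, intro allI impI)
    fix x assume "perm_atom ([(a, b)] @ [(b, c)]) x \<noteq> perm_atom [(a, c)] x"
    then have "(x = a \<or> x = b) \<and> a \<noteq> c \<and> b \<noteq> c"
      by (auto simp: swap_atom_def split: if_splits)
    then show "fresh N x t" using assms by auto
  qed
  then show ?thesis by (simp only: perm_trm_append)
qed

lemma aeq_Ab_fresh_cond_trans:
  assumes "aeq N s (perm_trm [(b, c)] t)" and "a = b \<or> fresh N a s" and "b = c \<or> fresh N b t"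
  shows "a = c \<or> fresh N a t"
proof (cases "a = b")
  case False
  then have "fresh N a (perm_trm [(b, c)] t)" using assms(2) fresh_aeq[OF assms(1)] by simp
  then show ?thesis using False by (cases "a = c") (simp_all add: fresh_swap_trm)
qed (use assms(3) in simp)

lemma aeq_trans: "aeq N t1 t2 \<Longrightarrow> aeq N t2 t3 \<Longrightarrow> aeq N t1 t3"
proof (induction t1 arbitrary: t2 t3)
  case (Fn f ts)
  obtain ts2 where t2: "t2 = Fn f ts2" "list_all2 (aeq N) ts ts2"
    using Fn.prems(1) by (auto elim: aeq_FnE)
  obtain ts3 where t3: "t3 = Fn f ts3" "list_all2 (aeq N) ts2 ts3"
    using Fn.prems(2) t2 by (auto elim: aeq_FnE)
  have "list_all2 (aeq N) ts ts3"
    using t2(2) t3(2) Fn.IH by (auto simp: list_all2_conv_all_nth)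
  then show ?case unfolding t3 by (rule aeq.aeq_fn)
next
  case (Ab a s1)
  obtain b s2 where t2: "t2 = Ab b s2" using Ab.prems(1) by (auto elim: aeq_AbE)
  obtain c s3 where t3: "t3 = Ab c s3" using Ab.prems(2) t2 by (auto elim: aeq_AbE)
  have s12: "aeq N s1 (perm_trm [(a, b)] s2)" and fa: "a = b \<or> fresh N a s2"
    using Ab.prems(1) t2 by (simp_all add: aeq_Ab_iff)
  have s23: "aeq N s2 (perm_trm [(b, c)] s3)" and fb: "b = c \<or> fresh N b s3"
    using Ab.prems(2) t2 t3 by (simp_all add: aeq_Ab_iff)
  have fa3: "a = c \<or> fresh N a s3" using s23 fa fb by (rule aeq_Ab_fresh_cond_trans)
  have "aeq N s1 (perm_trm [(a, b)] (perm_trm [(b, c)] s3))"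
    using Ab.IH s12 aeq_perm_trm[OF s23] by blast
  then have "aeq N s1 (perm_trm [(a, c)] s3)"
    using Ab.IH aeq_perm_trm_swap_swap[OF fa3 fb] by blast
  then show ?case unfolding t3 using fa3 by (simp add: aeq_Ab_iff)
next
  case (Susp \<pi> X)
  obtain \<pi>2 where t2: "t2 = Susp \<pi>2 X"
    and d12: "\<forall>a. perm_atom \<pi> a \<noteq> perm_atom \<pi>2 a \<longrightarrow> (a, X) \<in> N"
    using Susp.prems(1) by (auto elim: aeq_SuspE)
  obtain \<pi>3 where t3: "t3 = Susp \<pi>3 X"
    and d23: "\<forall>a. perm_atom \<pi>2 a \<noteq> perm_atom \<pi>3 a \<longrightarrow> (a, X) \<in> N"
    using Susp.prems(2) t2 by (auto elim: aeq_SuspE)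
  show ?case unfolding t3
  proof (rule aeq.aeq_susp, intro allI impI)
    fix a assume "perm_atom \<pi> a \<noteq> perm_atom \<pi>3 a"
    then have "perm_atom \<pi> a \<noteq> perm_atom \<pi>2 a \<or> perm_atom \<pi>2 a \<noteq> perm_atom \<pi>3 a" by auto
    then show "(a, X) \<in> N" using d12 d23 by blast
  qed
next
  case (At x)
  then show ?case by (blast elim: aeq_AtE)
qed

lemma fc1_eq_Some_subset_iff:
  fixes t :: "('a, 'v, 'f) trm" and ts :: "('a, 'v, 'f) trm list"
  shows "(\<exists>D. fc1 a t = Some D \<and> D \<subseteq> N) \<longleftrightarrow> fresh N a t"
    and "(\<exists>D. fc1_list a ts = Some D \<and> D \<subseteq> N) \<longleftrightarrow> (\<forall>t \<in> set ts. fresh N a t)"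
  by (induction a t and a ts rule: fc1_fc1_list.induct) (auto split: option.splits)

lemma FC_eq_Some_subset_iff:
  "(\<exists>\<Delta>. FC F = Some \<Delta> \<and> \<Delta> \<subseteq> N) \<longleftrightarrow> (\<forall>(a, t) \<in> F. fresh N a t)"
proof
  assume "\<exists>\<Delta>. FC F = Some \<Delta> \<and> \<Delta> \<subseteq> N"
  then have "\<forall>(a, t) \<in> F. \<exists>D. fc1 a t = Some D \<and> D \<subseteq> N"
    by (fastforce simp: FC_def split: if_splits)
  then show "\<forall>(a, t) \<in> F. fresh N a t" by (simp add: fc1_eq_Some_subset_iff)
next
  assume "\<forall>(a, t) \<in> F. fresh N a t"
  then have "\<forall>(a, t) \<in> F. \<exists>D. fc1 a t = Some D \<and> D \<subseteq> N"
    by (simp add: fc1_eq_Some_subset_iff)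
  then show "\<exists>\<Delta>. FC F = Some \<Delta> \<and> \<Delta> \<subseteq> N" by (fastforce simp: FC_def)
qed

lemma ctx_subst_eq_Some_subset_iff:
  "(\<exists>\<Delta>. ctx_subst N \<sigma> = Some \<Delta> \<and> \<Delta> \<subseteq> G) \<longleftrightarrow> (\<forall>(a, X) \<in> N. fresh G a (\<sigma> X))"
  unfolding ctx_subst_def FC_eq_Some_subset_iff by auto

lemma respects_ctx_if_fresh: "\<forall>(a, X) \<in> N. fresh G a (\<sigma> X) \<Longrightarrow> respects_ctx \<sigma> N"
  by (auto simp: respects_ctx_def dest: fresh_imp_notin_fa_ns)

lemma tic_le_iff:
  "tic_le \<Sigma> (N, t) (G, s) \<longleftrightarrow>
   (\<exists>\<sigma>. is_subst \<Sigma> \<sigma> \<and> (\<forall>(a, X) \<in> N. fresh G a (\<sigma> X)) \<and> aeq G (subst_trm \<sigma> t) s)"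
  unfolding tic_le_def ctx_subst_eq_Some_subset_iff by (auto intro: respects_ctx_if_fresh)

lemma asort_perm_atom:
  "\<forall>(a, b) \<in> set \<pi>. asort \<Sigma> a = asort \<Sigma> b \<Longrightarrow> asort \<Sigma> (perm_atom \<pi> c) = asort \<Sigma> c"
proof (induction \<pi>)
  case (Cons p \<pi>)
  obtain a b where p: "p = (a, b)" by fastforce
  have "asort \<Sigma> a = asort \<Sigma> b" using Cons.prems p by simp
  then have "asort \<Sigma> (swap_atom a b x) = asort \<Sigma> x" for x by (simp add: swap_atom_def)
  then show ?case using Cons by (simp add: p)
qed simp

lemma wsorted_perm_trm:
  "wsorted \<Sigma> t s \<Longrightarrow> \<forall>(a, b) \<in> set \<pi>. asort \<Sigma> a = asort \<Sigma> b \<Longrightarrow>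
   wsorted \<Sigma> (perm_trm \<pi> t) s"
proof (induction rule: wsorted.induct)
  case (ws_at a)
  then show ?case using wsorted.ws_at[of \<Sigma> "perm_atom \<pi> a"] by (simp add: asort_perm_atom)
next
  case (ws_ab t s a)
  then show ?case
    using wsorted.ws_ab[of \<Sigma> "perm_trm \<pi> t" s "perm_atom \<pi> a"] by (simp add: asort_perm_atom)
next
  case (ws_fn f ss s ts)
  have "list_all2 (wsorted \<Sigma>) (map (perm_trm \<pi>) ts) ss"
    using ws_fn.IH ws_fn.prems unfolding list_all2_map1 list_all2_conv_all_nth by simp
  then show ?case by (simp add: wsorted.ws_fn[OF ws_fn.hyps(1)])
next
  case (ws_susp \<pi>' X)
  then show ?case by (auto intro!: wsorted.ws_susp)
qed

lemma wsorted_subst_trm: "wsorted \<Sigma> t s \<Longrightarrow> is_subst \<Sigma> \<sigma> \<Longrightarrow> wsorted \<Sigma> (subst_trm \<sigma> t) s"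
proof (induction rule: wsorted.induct)
  case (ws_fn f ss s ts)
  have "list_all2 (wsorted \<Sigma>) (map (subst_trm \<sigma>) ts) ss"
    using ws_fn.IH ws_fn.prems unfolding list_all2_map1 list_all2_conv_all_nth by simp
  then show ?case by (simp add: wsorted.ws_fn[OF ws_fn.hyps(1)])
next
  case (ws_susp \<pi> X)
  then show ?case by (simp add: wsorted_perm_trm is_subst_def)
qed (simp_all add: wsorted.ws_at wsorted.ws_ab)

lemma subst_trm_cong: "(\<And>X. X \<in> vars_trm t \<Longrightarrow> \<sigma> X = \<sigma>' X) \<Longrightarrow> subst_trm \<sigma> t = subst_trm \<sigma>' t"
  by (induction t) auto

lemma nom_unif_solvable_if_joinable:
  assumes "(vars_trm t1 \<union> vars_ctx N1) \<inter> (vars_trm t2 \<union> vars_ctx N2) = {}"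
    and "joinable \<Sigma> (N1, t1) (N2, t2)"
  shows "nom_unif_solvable \<Sigma> t1 t2 (N1 \<union> N2)"
proof -
  obtain G s where "finite G" and le1: "tic_le \<Sigma> (N1, t1) (G, s)"
    and le2: "tic_le \<Sigma> (N2, t2) (G, s)"
    using assms(2) unfolding joinable_def term_in_ctx_def by blast
  obtain \<sigma>1 where \<sigma>1: "is_subst \<Sigma> \<sigma>1" "\<forall>(a, X) \<in> N1. fresh G a (\<sigma>1 X)"
    "aeq G (subst_trm \<sigma>1 t1) s"
    using le1 unfolding tic_le_iff by blast
  obtain \<sigma>2 where \<sigma>2: "is_subst \<Sigma> \<sigma>2" "\<forall>(a, X) \<in> N2. fresh G a (\<sigma>2 X)"
    "aeq G (subst_trm \<sigma>2 t2) s"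
    using le2 unfolding tic_le_iff by blast
  define \<sigma> where "\<sigma> X = (if X \<in> vars_trm t1 \<union> vars_ctx N1 then \<sigma>1 X else \<sigma>2 X)" for X
  have \<sigma>_left: "\<sigma> X = \<sigma>1 X" if "X \<in> vars_trm t1 \<union> vars_ctx N1" for X
    using that by (simp add: \<sigma>_def)
  have \<sigma>_right: "\<sigma> X = \<sigma>2 X" if "X \<in> vars_trm t2 \<union> vars_ctx N2" for X
    using that assms(1) by (auto simp: \<sigma>_def)
  have "is_subst \<Sigma> \<sigma>" using \<sigma>1(1) \<sigma>2(1) by (simp add: is_subst_def \<sigma>_def)
  have "subst_trm \<sigma> t1 = subst_trm \<sigma>1 t1" and "subst_trm \<sigma> t2 = subst_trm \<sigma>2 t2"
    by (auto intro!: subst_trm_cong \<sigma>_left \<sigma>_right)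
  then have "aeq G (subst_trm \<sigma> t1) (subst_trm \<sigma> t2)"
    using aeq_trans[OF \<sigma>1(3) aeq_sym[OF \<sigma>2(3)]] by simp
  moreover have "\<forall>(a, X) \<in> N1 \<union> N2. fresh G a (\<sigma> X)"
    using \<sigma>1(2) \<sigma>2(2) \<sigma>_left \<sigma>_right by (force simp: vars_ctx_def)
  ultimately show ?thesis
    unfolding nom_unif_solvable_def using \<open>finite G\<close> \<open>is_subst \<Sigma> \<sigma>\<close> by blast
qed

lemma joinable_if_nom_unif_solvable:
  assumes "term_in_ctx \<Sigma> N2 t2" and "nom_unif_solvable \<Sigma> t1 t2 (N1 \<union> N2)"
  shows "joinable \<Sigma> (N1, t1) (N2, t2)"
proof -
  obtain G \<sigma> where "finite G" and "is_subst \<Sigma> \<sigma>"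
    and unif: "aeq G (subst_trm \<sigma> t1) (subst_trm \<sigma> t2)"
    and fresh: "\<forall>(a, X) \<in> N1 \<union> N2. fresh G a (\<sigma> X)"
    using assms(2) unfolding nom_unif_solvable_def by blast
  have "term_in_ctx \<Sigma> G (subst_trm \<sigma> t2)"
    using assms(1) \<open>finite G\<close> \<open>is_subst \<Sigma> \<sigma>\<close> by (auto simp: term_in_ctx_def intro: wsorted_subst_trm)
  moreover have "tic_le \<Sigma> (N1, t1) (G, subst_trm \<sigma> t2)"
    using \<open>is_subst \<Sigma> \<sigma>\<close> fresh unif by (auto simp: tic_le_iff)
  moreover have "tic_le \<Sigma> (N2, t2) (G, subst_trm \<sigma> t2)"
    using \<open>is_subst \<Sigma> \<sigma>\<close> fresh aeq_refl by (auto simp: tic_le_iff)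
  ultimately show ?thesis unfolding joinable_def by blast
qed

theorem lemma2:
  fixes \<Sigma> :: "('a, 'v, 'f, 's) sortsig"
    and N1 N2 :: "('a, 'v) fctx"
    and t1 t2 :: "('a, 'v, 'f) trm"
  assumes atoms_inf: "\<forall>a. infinite {b. asort \<Sigma> b = asort \<Sigma> a}"
    and tic1: "term_in_ctx \<Sigma> N1 t1"
    and tic2: "term_in_ctx \<Sigma> N2 t2"
    and disj: "(vars_trm t1 \<union> vars_ctx N1) \<inter> (vars_trm t2 \<union> vars_ctx N2) = {}"
  shows "joinable \<Sigma> (N1, t1) (N2, t2) \<longleftrightarrow> nom_unif_solvable \<Sigma> t1 t2 (N1 \<union> N2)"
  using nom_unif_solvable_if_joinable[OF disj] joinable_if_nom_unif_solvable[OF tic2] by blast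

end
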